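(* Let $d\in\mathbb{N}$, $0<s,p<\infty$ with $sp\neq d$ (no restriction $s<1$). Let $\mathbb{Z}_+=\{0,1,2,\ldots\}$ and $\|x\|_\infty=\max_i|x_i|$. Then: \begin{enumerate} \item If $sp<d$ and $d-sp\ge\delta>0$, there is a constant $c=c(s,p,\delta)<\infty$ such that \[\sum_{j\in\mathbb{Z}_+^d\setminus\{0\}}\frac{|u(j)|^p}{\|j\|_\infty^{sp}}\le c\sum_{j\in\mathbb{Z}_+^d\setminus\{0\}}\ \sum_{\substack{m\in\mathbb{Z}_+^d\setminus\{0\}\\ m\ne j}}\frac{|u(j)-u(m)|^p}{\|j-m\|_\infty^{sp+d}}\] for all $u:\mathbb{Z}_+^d\to\mathbb{C}$ for which the left side is finite. \item If $sp=d$ and $\varepsilon>0$, there is a constant $c=c(d,s,p,\varepsilon)<\infty$ such that \[\sum_{j\in\mathbb{Z}_+^d\setminus\{0\}}\frac{|u(j)|^p}{\|j\|_\infty^{sp+\varepsilon}}\le c\sum_{j\in\mathbb{Z}_+^d}\ \sum_{\substack{m\in\mathbb{Z}_+^d\\ m\ne j}}\frac{|u(j)-u(m)|^p}{\|j-m\|_\infty^{sp+d+\varepsilon}}\le c\sum_{j\in\mathbb{Z}_+^d}\ \sum_{\substack{m\in\mathbb{Z}_+^d\\ m\ne j}}\frac{|u(j)-u(m)|^p}{\|j-m\|_\infty^{sp+d}}\] for all $u:\mathbb{Z}_+^d\to\mathbb{C}$ with $u(0)=0$. \item If $sp>d$, there is a constant $c=c(d,s,p)<\infty$ such that \[\sum_{j\in\mathbb{Z}_+^d\setminus\{0\}}\frac{|u(j)|^p}{\|j\|_\infty^{sp}}\le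 c\sum_{j\in\mathbb{Z}_+^d}\ \sum_{\substack{m\in\mathbb{Z}_+^d\\ m\ne j}}\frac{|u(j)-u(m)|^p}{\|j-m\|_\infty^{sp+d}}\] for all $u:\mathbb{Z}_+^d\to\mathbb{C}$ with $u(0)=0$. \item All three statements above also hold with $\mathbb{Z}_+^d$ replaced by $\mathbb{Z}^d$ throughout (with possibly bigger constants). \end{enumerate} *)

theory Defs
  imports "HOL-Analysis.Analysis"
begin

text \<open>Points of Z^d are represented as functions nat \<Rightarrow> int vanishing outside {..<d}.\<close>

definition Zfull :: "nat \<Rightarrow> (nat \<Rightarrow> int) set" where
  "Zfull d = {j. \<forall>i\<ge>d. j i = 0}"

definition Zplus :: "nat \<Rightarrow> (nat \<Rightarrow> int) set" where
  "Zplus d = {j. (\<forall>i\<ge>d. j i = 0) \<and> (\<forall>i. 0 \<le> j i)}"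

definition zpt :: "nat \<Rightarrow> int" where
  "zpt = (\<lambda>_. 0)"

definition supnorm :: "nat \<Rightarrow> (nat \<Rightarrow> int) \<Rightarrow> real" where
  "supnorm d j = real_of_int (MAX i\<in>{..<d}. \<bar>j i\<bar>)"

definition hardy_lhs :: "(nat \<Rightarrow> int) set \<Rightarrow> nat \<Rightarrow> real \<Rightarrow> real \<Rightarrow> ((nat \<Rightarrow> int) \<Rightarrow> complex) \<Rightarrow> ennreal" where
  "hardy_lhs A d p q u =
     (\<integral>\<^sup>+ j. ennreal (cmod (u j) powr p / supnorm d j powr q) \<partial>count_space (A - {zpt}))"

definition hardy_rhs :: "(nat \<Rightarrow> int) set \<Rightarrow> nat \<Rightarrow> real \<Rightarrow> real \<Rightarrow> ((nat \<Rightarrow> int) \<Rightarrow> complex) \<Rightarrow> ennreal" where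
  "hardy_rhs A d p q u =
     (\<integral>\<^sup>+ j. (\<integral>\<^sup>+ m. ennreal (cmod (u j - u m) powr p / supnorm d (\<lambda>i. j i - m i) powr q)
        \<partial>count_space (A - {j})) \<partial>count_space A)"

definition hardy_parts :: "(nat \<Rightarrow> (nat \<Rightarrow> int) set) \<Rightarrow> bool" where
  "hardy_parts D \<longleftrightarrow>
    \<comment> \<open>(1) sp < d, d - sp \<ge> \<delta> > 0; constant depends only on s, p, \<delta>\<close>
    (\<forall>s p \<delta>::real. 0 < s \<longrightarrow> 0 < p \<longrightarrow> 0 < \<delta> \<longrightarrow>
       (\<exists>c::real. \<forall>d::nat. 1 \<le> d \<longrightarrow> s * p < real d \<longrightarrow> real d - s * p \<ge> \<delta> \<longrightarrow>
          (\<forall>u. hardy_lhs (D d) d p (s * p) u < \<infinity> \<longrightarrow>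
             hardy_lhs (D d) d p (s * p) u
               \<le> ennreal c * hardy_rhs (D d - {zpt}) d p (s * p + real d) u)))
  \<and>
    \<comment> \<open>(2) sp = d, \<epsilon> > 0; constant depends on d, s, p, \<epsilon>\<close>
    (\<forall>d::nat. \<forall>s p \<epsilon>::real. 1 \<le> d \<longrightarrow> 0 < s \<longrightarrow> 0 < p \<longrightarrow> s * p = real d \<longrightarrow> 0 < \<epsilon> \<longrightarrow>
       (\<exists>c::real. \<forall>u. u zpt = 0 \<longrightarrow>
          hardy_lhs (D d) d p (s * p + \<epsilon>) u
            \<le> ennreal c * hardy_rhs (D d) d p (s * p + real d + \<epsilon>) u
        \<and> ennreal c * hardy_rhs (D d) d p (s * p + real d + \<epsilon>) u
            \<le> ennreal c * hardy_rhs (D d) d p (s * p + real d) u))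
  \<and>
    \<comment> \<open>(3) sp > d; constant depends on d, s, p\<close>
    (\<forall>d::nat. \<forall>s p::real. 1 \<le> d \<longrightarrow> 0 < s \<longrightarrow> 0 < p \<longrightarrow> s * p > real d \<longrightarrow>
       (\<exists>c::real. \<forall>u. u zpt = 0 \<longrightarrow>
          hardy_lhs (D d) d p (s * p) u
            \<le> ennreal c * hardy_rhs (D d) d p (s * p + real d) u))"

end

theory Submission
  imports Defs
begin

text \<open>
  The proof is an averaging argument. For every lattice point j \<noteq> 0 choose a finite set T(j) of
  comparison points and average |u(j)|^p \<le> 2^p (|u(j) - u(m)|^p + |u(m)|^p) over m \<in> T(j). The
  difference terms are bounded by the right-hand side as soon as ||j - m||^(sp+d) \<le> A ||j||^sp |T(j)|
  on T(j). After exchanging the order of summation, the remaining terms are at most \<theta> times the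
  left-hand side, where \<theta> is controlled by the tail sum of ||j||^-(sp+d) over ||j|| \<ge> N, which is
  O(N^-sp) because spheres have O(n^(d-1)) points; once 2^p \<theta> \<le> 1/2 the left-hand side is absorbed.

  For sp < d, T(j) is the cube of side K||j|| at j pointing away from the origin, and the absorption
  uses the assumed finiteness of the left-hand side. For sp > d, T(j) is the ball of radius ||j||/K
  about the origin, where u vanishes, and the absorption is done on the finite truncations
  ||j|| \<le> R. In both cases \<theta> \<rightarrow> 0 as K \<rightarrow> \<infinity>. The case sp = d follows from sp + \<epsilon> > d, because
  the kernel decreases as its exponent grows.
\<close>

section \<open>Sums over countable sets\<close>

lemma nn_integral_count_space_mono_set:
  "A \<subseteq> B \<Longrightarrow> (\<integral>\<^sup>+x. f x \<partial>count_space A) \<le> (\<integral>\<^sup>+x. f x \<partial>count_space B)"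
  by (auto simp: nn_integral_count_space_indicator intro!: nn_integral_mono split: split_indicator)

lemma nn_integral_count_space_restrict:
  assumes "A \<subseteq> B"
  shows "(\<integral>\<^sup>+x. f x \<partial>count_space A) = (\<integral>\<^sup>+x. (if x \<in> A then f x else 0) \<partial>count_space B)"
proof -
  have "(\<integral>\<^sup>+x. f x \<partial>count_space A) = (\<integral>\<^sup>+x. (if x \<in> A then f x else 0) \<partial>count_space A)"
    by (intro nn_integral_cong) simp
  also have "\<dots> = (\<integral>\<^sup>+x. (if x \<in> A then f x else 0) \<partial>count_space B)"
    using assms by (intro nn_integral_count_space_eq) auto
  finally show ?thesis .
qed

lemma nn_integral_count_space_level_sets:
  fixes h :: "'a \<Rightarrow> nat" and g :: "nat \<Rightarrow> ennreal"
  assumes "\<And>n. finite {x \<in> A. h x = n}"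
  shows "(\<integral>\<^sup>+x. g (h x) \<partial>count_space A) = (\<Sum>n. of_nat (card {x \<in> A. h x = n}) * g n)"
proof -
  have "(\<integral>\<^sup>+x. g (h x) \<partial>count_space A) = (\<integral>\<^sup>+x. (\<Sum>n. g n * indicator {x \<in> A. h x = n} x) \<partial>count_space A)"
  proof (intro nn_integral_cong)
    fix x assume "x \<in> space (count_space A)"
    have "g (h x) = (\<Sum>n. if n = h x then g n else 0)"
      using sums_single[of "h x" g] by (simp add: sums_iff)
    also have "\<dots> = (\<Sum>n. g n * indicator {x \<in> A. h x = n} x)"
      using \<open>x \<in> space (count_space A)\<close> by (intro suminf_cong) (auto simp: indicator_def)
    finally show "g (h x) = (\<Sum>n. g n * indicator {x \<in> A. h x = n} x)" .
  qed
  also have "\<dots> = (\<Sum>n. g n * emeasure (count_space A) {x \<in> A. h x = n})"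
    by (simp add: nn_integral_suminf nn_integral_cmult_indicator)
  also have "\<dots> = (\<Sum>n. of_nat (card {x \<in> A. h x = n}) * g n)"
    using assms by (simp add: emeasure_count_space_finite mult.commute)
  finally show ?thesis .
qed

lemma nn_integral_count_space_le_if_truncations_le:
  fixes h :: "'a \<Rightarrow> nat"
  assumes "\<And>R. (\<integral>\<^sup>+x. f x \<partial>count_space {x \<in> A. h x \<le> R}) \<le> c"
  shows "(\<integral>\<^sup>+x. f x \<partial>count_space A) \<le> c"
proof -
  have "(\<integral>\<^sup>+x. f x \<partial>count_space A) = (\<integral>\<^sup>+x. (SUP R. f x * indicator {x. h x \<le> R} x) \<partial>count_space A)"
  proof (intro nn_integral_cong antisym)
    show "f x \<le> (SUP R. f x * indicator {x. h x \<le> R} x)" for x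
      by (rule SUP_upper2[of "h x"]) auto
  qed (auto intro!: SUP_least simp: indicator_def)
  also have "\<dots> = (SUP R. \<integral>\<^sup>+x. f x * indicator {x. h x \<le> R} x \<partial>count_space A)"
    by (intro nn_integral_monotone_convergence_SUP)
      (auto simp: incseq_def le_fun_def indicator_def)
  also have "\<dots> \<le> c"
  proof (intro SUP_least)
    fix R
    have "(\<integral>\<^sup>+x. f x * indicator {x. h x \<le> R} x \<partial>count_space A)
        = (\<integral>\<^sup>+x. f x \<partial>count_space {x \<in> A. h x \<le> R})"
      by (auto simp: nn_integral_count_space_indicator intro!: nn_integral_cong split: split_indicator)
    then show "(\<integral>\<^sup>+x. f x * indicator {x. h x \<le> R} x \<partial>count_space A) \<le> c"
      using assms by simp
  qed
  finally show ?thesis .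
qed

lemma ennreal_le_twice_if_absorbed:
  fixes x y :: ennreal
  assumes "x < \<infinity>" and "x \<le> y + ennreal (1 / 2) * x"
  shows "x \<le> 2 * y"
proof (cases y)
  case (real s)
  obtain r where r: "x = ennreal r" "0 \<le> r"
    using assms(1) by (cases x) auto
  have "ennreal (1 / 2) * x = ennreal (r / 2)"
    unfolding r(1) using r(2) by (subst ennreal_mult[symmetric]) auto
  then have "ennreal r \<le> ennreal (s + r / 2)"
    using assms(2) r real by (simp add: ennreal_plus)
  then have "r \<le> s + r / 2"
    using r real by (subst (asm) ennreal_le_iff) auto
  then have "ennreal r \<le> ennreal (2 * s)"
    by (intro ennreal_leI) simp
  then show ?thesis
    using r real by (simp add: ennreal_mult)
qed simp

section \<open>The averaging inequality\<close>

lemma norm_powr_le_split: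
  fixes a b :: "'a :: real_normed_vector"
  assumes "0 < p"
  shows "norm a powr p \<le> 2 powr p * (norm (a - b) powr p + norm b powr p)"
proof -
  have "norm a \<le> 2 * max (norm (a - b)) (norm b)"
    using norm_triangle_ineq[of "a - b" b] by simp
  then have "norm a powr p \<le> (2 * max (norm (a - b)) (norm b)) powr p"
    using assms by (intro powr_mono2) auto
  also have "\<dots> = 2 powr p * max (norm (a - b)) (norm b) powr p"
    by (simp add: powr_mult)
  also have "max (norm (a - b)) (norm b) powr p \<le> norm (a - b) powr p + norm b powr p"
    by (simp add: max_def)
  finally show ?thesis
    by simp
qed

lemma average_powr_split:
  fixes u :: "'a \<Rightarrow> complex" and k :: "'a \<Rightarrow> real" and w A :: real
  assumes T: "finite T" "T \<noteq> {}" and "0 < p" "0 < w" "0 \<le> A"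
    and k: "\<And>m. m \<in> T \<Longrightarrow> m \<noteq> j \<Longrightarrow> 0 < k m \<and> k m \<le> A * w * card T"
  shows "cmod (u j) powr p / w \<le> 2 powr p * A * (\<Sum>m\<in>T - {j}. cmod (u j - u m) powr p / k m)
    + 2 powr p * (\<Sum>m\<in>T. cmod (u m) powr p / (w * card T))"
proof -
  define c where "c = real (card T)"
  have c: "0 < c"
    using T by (simp add: c_def card_gt_0_iff)
  have "cmod (u j) powr p / w = (\<Sum>m\<in>T. cmod (u j) powr p / (w * c))"
    using c \<open>0 < w\<close> by (simp add: c_def)
  also have "\<dots> \<le> (\<Sum>m\<in>T. 2 powr p * (cmod (u j - u m) powr p / (w * c))
      + 2 powr p * (cmod (u m) powr p / (w * c)))"
  proof (intro sum_mono)
    fix m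
    have "cmod (u j) powr p / (w * c)
        \<le> 2 powr p * (cmod (u j - u m) powr p + cmod (u m) powr p) / (w * c)"
      using norm_powr_le_split[OF \<open>0 < p\<close>, of "u j" "u m"] c \<open>0 < w\<close> by (simp add: divide_right_mono)
    then show "cmod (u j) powr p / (w * c) \<le> 2 powr p * (cmod (u j - u m) powr p / (w * c))
        + 2 powr p * (cmod (u m) powr p / (w * c))"
      by (simp add: add_divide_distrib distrib_left)
  qed
  also have "\<dots> = 2 powr p * (\<Sum>m\<in>T - {j}. cmod (u j - u m) powr p / (w * c))
      + 2 powr p * (\<Sum>m\<in>T. cmod (u m) powr p / (w * c))"
    using T(1) \<open>0 < p\<close> by (simp add: sum.distrib sum_distrib_left sum_diff1)
  also have "(\<Sum>m\<in>T - {j}. cmod (u j - u m) powr p / (w * c))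
      \<le> (\<Sum>m\<in>T - {j}. A * (cmod (u j - u m) powr p / k m))"
  proof (intro sum_mono)
    fix m assume "m \<in> T - {j}"
    then have "1 / (w * c) \<le> A / k m"
      using k[of m] c \<open>0 < w\<close> by (simp add: field_simps c_def)
    then show "cmod (u j - u m) powr p / (w * c) \<le> A * (cmod (u j - u m) powr p / k m)"
      using mult_left_mono[of "1 / (w * c)" "A / k m" "cmod (u j - u m) powr p"] by (simp add: mult.commute)
  qed
  finally show ?thesis
    by (simp add: c_def sum_distrib_left mult.assoc mult_left_mono)
qed

text \<open>
  Assumption kernel controls the difference terms of the averaging; after exchanging the order
  of summation, assumption dual bounds the remaining terms by \<theta> times the left-hand side.
\<close>

context
  fixes u :: "'a \<Rightarrow> complex" and W :: "'a \<Rightarrow> real" and k :: "'a \<Rightarrow> 'a \<Rightarrow> real"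
    and T :: "'a \<Rightarrow> 'a set" and I J :: "'a set" and p A \<theta> :: real
  assumes countable: "countable I" and subset: "I \<subseteq> J"
    and p: "0 < p" and A: "0 \<le> A" and \<theta>: "0 \<le> \<theta>"
    and W_pos: "\<And>j. j \<in> I \<Longrightarrow> 0 < W j"
    and T: "\<And>j. j \<in> I \<Longrightarrow> T j \<subseteq> J \<and> finite (T j) \<and> T j \<noteq> {}"
    and kernel: "\<And>j m. j \<in> I \<Longrightarrow> m \<in> T j \<Longrightarrow> m \<noteq> j \<Longrightarrow> 0 < k j m \<and> k j m \<le> A * W j * card (T j)"
    and dual: "\<And>m. m \<in> J \<Longrightarrow> u m \<noteq> 0 \<Longrightarrow>
      (\<integral>\<^sup>+j. (if m \<in> T j then ennreal (1 / (W j * card (T j))) else 0) \<partial>count_space I)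
        \<le> (if m \<in> I then ennreal (\<theta> / W m) else 0)"
begin

lemma averaging_pointwise:
  assumes j: "j \<in> I"
  shows "ennreal (cmod (u j) powr p / W j)
    \<le> ennreal (2 powr p * A) * (\<integral>\<^sup>+m. ennreal (cmod (u j - u m) powr p / k j m) \<partial>count_space (J - {j}))
      + ennreal (2 powr p) * (\<integral>\<^sup>+m. (if m \<in> T j then ennreal (cmod (u m) powr p / (W j * card (T j))) else 0)
          \<partial>count_space J)"
proof -
  define X where "X = (\<Sum>m\<in>T j - {j}. cmod (u j - u m) powr p / k j m)"
  define Y where "Y = (\<Sum>m\<in>T j. cmod (u m) powr p / (W j * card (T j)))"
  have X: "0 \<le> X"
    unfolding X_def by (intro sum_nonneg divide_nonneg_pos) (auto dest: kernel[OF j])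
  have Y: "0 \<le> Y"
    unfolding Y_def using W_pos[OF j] by (intro sum_nonneg) auto
  have "ennreal X = (\<Sum>m\<in>T j - {j}. ennreal (cmod (u j - u m) powr p / k j m))"
    unfolding X_def by (intro sum_ennreal[symmetric] divide_nonneg_pos) (auto dest: kernel[OF j])
  also have "\<dots> = (\<integral>\<^sup>+m. ennreal (cmod (u j - u m) powr p / k j m) \<partial>count_space (T j - {j}))"
    using T[OF j] by (simp add: nn_integral_count_space_finite)
  also have "\<dots> \<le> (\<integral>\<^sup>+m. ennreal (cmod (u j - u m) powr p / k j m) \<partial>count_space (J - {j}))"
    using T[OF j] by (intro nn_integral_count_space_mono_set) auto
  finally have X_le: "ennreal X \<le> \<dots>" .
  have "ennreal Y = (\<Sum>m\<in>T j. ennreal (cmod (u m) powr p / (W j * card (T j))))"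
    unfolding Y_def using W_pos[OF j] by (intro sum_ennreal[symmetric]) auto
  also have "\<dots> = (\<integral>\<^sup>+m. ennreal (cmod (u m) powr p / (W j * card (T j))) \<partial>count_space (T j))"
    using T[OF j] by (simp add: nn_integral_count_space_finite)
  also have "\<dots> = (\<integral>\<^sup>+m. (if m \<in> T j then ennreal (cmod (u m) powr p / (W j * card (T j))) else 0)
      \<partial>count_space J)"
    using T[OF j] by (intro nn_integral_count_space_restrict) auto
  finally have Y_eq: "ennreal Y = \<dots>" .
  have "cmod (u j) powr p / W j \<le> 2 powr p * A * X + 2 powr p * Y"
    unfolding X_def Y_def using T[OF j] p W_pos[OF j] A kernel[OF j]
    by (intro average_powr_split) auto
  then have "ennreal (cmod (u j) powr p / W j) \<le> ennreal (2 powr p * A) * ennreal X + ennreal (2 powr p) * ennreal Y"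
    using A X Y by (simp add: ennreal_leI flip: ennreal_mult ennreal_plus)
  also have "\<dots> \<le> ennreal (2 powr p * A) * (\<integral>\<^sup>+m. ennreal (cmod (u j - u m) powr p / k j m) \<partial>count_space (J - {j}))
      + ennreal (2 powr p) * (\<integral>\<^sup>+m. (if m \<in> T j then ennreal (cmod (u m) powr p / (W j * card (T j))) else 0)
          \<partial>count_space J)"
    unfolding Y_eq by (intro add_mono mult_left_mono X_le) auto
  finally show ?thesis .
qed

lemma averaging_dual_term:
  assumes m: "m \<in> J"
  shows "(\<integral>\<^sup>+j. (if m \<in> T j then ennreal (cmod (u m) powr p / (W j * card (T j))) else 0) \<partial>count_space I)
    \<le> ennreal \<theta> * (if m \<in> I then ennreal (cmod (u m) powr p / W m) else 0)"
proof (cases "u m = 0")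
  case False
  have "(\<integral>\<^sup>+j. (if m \<in> T j then ennreal (cmod (u m) powr p / (W j * card (T j))) else 0) \<partial>count_space I)
      = ennreal (cmod (u m) powr p) *
        (\<integral>\<^sup>+j. (if m \<in> T j then ennreal (1 / (W j * card (T j))) else 0) \<partial>count_space I)"
    by (auto simp flip: nn_integral_cmult ennreal_mult' intro!: nn_integral_cong)
  also have "\<dots> \<le> ennreal (cmod (u m) powr p) * (if m \<in> I then ennreal (\<theta> / W m) else 0)"
    using dual[OF m False] by (rule mult_left_mono) simp
  also have "\<dots> = ennreal \<theta> * (if m \<in> I then ennreal (cmod (u m) powr p / W m) else 0)"
  proof (cases "m \<in> I")
    case True
    have "ennreal (cmod (u m) powr p) * ennreal (\<theta> / W m) = ennreal (cmod (u m) powr p * (\<theta> / W m))"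
      by (rule ennreal_mult'[symmetric]) simp
    also have "\<dots> = ennreal (\<theta> * (cmod (u m) powr p / W m))"
      by (simp add: mult.commute)
    also have "\<dots> = ennreal \<theta> * ennreal (cmod (u m) powr p / W m)"
      using \<theta> by (rule ennreal_mult')
    finally show ?thesis
      using True by simp
  qed simp
  finally show ?thesis .
next
  case True
  then have "(if m \<in> T j then ennreal (cmod (u m) powr p / (W j * card (T j))) else 0) = 0" for j
    by simp
  then show ?thesis
    by simp
qed

lemma averaging_inequality:
  "(\<integral>\<^sup>+j. ennreal (cmod (u j) powr p / W j) \<partial>count_space I)
    \<le> ennreal (2 powr p * A) *
        (\<integral>\<^sup>+j. \<integral>\<^sup>+m. ennreal (cmod (u j - u m) powr p / k j m) \<partial>count_space (J - {j}) \<partial>count_space I)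
      + ennreal (2 powr p * \<theta>) * (\<integral>\<^sup>+j. ennreal (cmod (u j) powr p / W j) \<partial>count_space I)"
proof -
  define F where "F j m = (if m \<in> T j then ennreal (cmod (u m) powr p / (W j * card (T j))) else 0)" for j m
  have "(\<integral>\<^sup>+j. ennreal (cmod (u j) powr p / W j) \<partial>count_space I)
      \<le> (\<integral>\<^sup>+j. ennreal (2 powr p * A) *
            (\<integral>\<^sup>+m. ennreal (cmod (u j - u m) powr p / k j m) \<partial>count_space (J - {j}))
          + ennreal (2 powr p) * (\<integral>\<^sup>+m. F j m \<partial>count_space J) \<partial>count_space I)"
    unfolding F_def by (intro nn_integral_mono averaging_pointwise) simp
  also have "\<dots> = ennreal (2 powr p * A) *
        (\<integral>\<^sup>+j. \<integral>\<^sup>+m. ennreal (cmod (u j - u m) powr p / k j m) \<partial>count_space (J - {j}) \<partial>count_space I)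
      + ennreal (2 powr p) * (\<integral>\<^sup>+m. \<integral>\<^sup>+j. F j m \<partial>count_space I \<partial>count_space J)"
    using countable by (simp add: nn_integral_add nn_integral_cmult nn_integral_count_space_nn_integral)
  also have "(\<integral>\<^sup>+m. \<integral>\<^sup>+j. F j m \<partial>count_space I \<partial>count_space J)
      \<le> (\<integral>\<^sup>+m. ennreal \<theta> * (if m \<in> I then ennreal (cmod (u m) powr p / W m) else 0) \<partial>count_space J)"
    unfolding F_def using averaging_dual_term by (intro nn_integral_mono) simp
  also have "\<dots> = ennreal \<theta> * (\<integral>\<^sup>+m. ennreal (cmod (u m) powr p / W m) \<partial>count_space I)"
    using subset by (simp add: nn_integral_cmult nn_integral_count_space_restrict)
  finally show ?thesis
    using \<theta> by (simp add: ennreal_mult mult.assoc mult_left_mono add_mono)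
qed

lemma averaging_absorbed:
  assumes "2 powr p * \<theta> \<le> 1 / 2"
    and finite: "(\<integral>\<^sup>+j. ennreal (cmod (u j) powr p / W j) \<partial>count_space I) < \<infinity>"
  shows "(\<integral>\<^sup>+j. ennreal (cmod (u j) powr p / W j) \<partial>count_space I)
    \<le> ennreal (2 * 2 powr p * A) *
        (\<integral>\<^sup>+j. \<integral>\<^sup>+m. ennreal (cmod (u j - u m) powr p / k j m) \<partial>count_space (J - {j}) \<partial>count_space I)"
proof -
  define S where "S = (\<integral>\<^sup>+j. ennreal (cmod (u j) powr p / W j) \<partial>count_space I)"
  define R where "R = (\<integral>\<^sup>+j. \<integral>\<^sup>+m. ennreal (cmod (u j - u m) powr p / k j m)
    \<partial>count_space (J - {j}) \<partial>count_space I)"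
  have "S \<le> ennreal (2 powr p * A) * R + ennreal (2 powr p * \<theta>) * S"
    unfolding S_def R_def by (rule averaging_inequality)
  also have "\<dots> \<le> ennreal (2 powr p * A) * R + ennreal (1 / 2) * S"
    using assms(1) by (intro add_left_mono mult_right_mono ennreal_leI) auto
  finally have "S \<le> 2 * (ennreal (2 powr p * A) * R)"
    using finite unfolding S_def by (intro ennreal_le_twice_if_absorbed)
  then show ?thesis
    using A by (simp add: S_def R_def ennreal_mult mult.assoc)
qed

end

section \<open>Tails of p-series\<close>

lemma powr_le_diff_powr:
  fixes a :: real and n :: nat
  assumes "0 < a" and "0 < n"
  shows "real n powr - (1 + a) \<le> 2 powr (1 + a) / a * (real n powr - a - real (Suc n) powr - a)"
proof -
  have exponent: "- a - 1 = - (1 + a)"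
    by simp
  have "((\<lambda>x. x powr - a) has_real_derivative - a * x powr - (1 + a)) (at x)"
    if "real n \<le> x" for x
    using that assms unfolding exponent[symmetric] by (auto intro!: derivative_eq_intros)
  then obtain z where z: "real n < z" "z < real (Suc n)"
    and mvt: "real (Suc n) powr - a - real n powr - a = (real (Suc n) - real n) * (- a * z powr - (1 + a))"
    using MVT2[of "real n" "real (Suc n)" "\<lambda>x. x powr - a" "\<lambda>x. - a * x powr - (1 + a)"] by auto
  have "(2 * real n) powr - (1 + a) \<le> z powr - (1 + a)"
    using z assms by (intro powr_mono2') auto
  also have "(2 * real n) powr - (1 + a) = real n powr - (1 + a) / 2 powr (1 + a)"
    using powr_minus[of 2 "1 + a"] by (simp add: powr_mult divide_inverse)
  finally have bound: "real n powr - (1 + a) \<le> 2 powr (1 + a) * z powr - (1 + a)"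
    by (simp add: divide_le_eq mult.commute)
  have diff: "real n powr - a - real (Suc n) powr - a = a * z powr - (1 + a)"
    using mvt by simp
  show ?thesis
    unfolding diff using bound assms by simp
qed

lemma suminf_powr_tail_le:
  fixes a :: real and N :: nat
  assumes "0 < a" and "0 < N"
  shows "(\<Sum>n. if N \<le> n then ennreal (real n powr - (1 + a)) else 0)
    \<le> ennreal (2 powr (1 + a) / a * real N powr - a)"
proof -
  define h where "h n = (if N \<le> n then real n powr - a - real (Suc n) powr - a else 0)" for n
  have lim: "(\<lambda>i. real (i + N) powr - a) \<longlonglongrightarrow> 0"
    using assms by (intro tendsto_neg_powr filterlim_subseq[THEN filterlim_compose[OF filterlim_real_sequentially]])
      (auto simp: strict_mono_def)
  have "(\<lambda>i. h (i + N)) sums (real N powr - a)"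
    using telescope_sums'[OF lim] by (simp add: h_def)
  moreover have "(\<Sum>i<N. h i) = 0"
    by (simp add: h_def)
  ultimately have h_sums: "h sums (real N powr - a)"
    using sums_iff_shift[of h N] by simp
  have h_nonneg: "0 \<le> h n" for n
    using assms by (auto simp: h_def intro!: powr_mono2')
  have "(\<Sum>n. if N \<le> n then ennreal (real n powr - (1 + a)) else 0) \<le> (\<Sum>n. ennreal (2 powr (1 + a) / a * h n))"
    using powr_le_diff_powr[OF assms(1)] assms(2)
    by (intro suminf_le summableI) (auto simp: h_def intro!: ennreal_leI)
  also have "\<dots> = ennreal (2 powr (1 + a) / a * real N powr - a)"
    using assms h_nonneg by (intro suminf_ennreal_eq sums_mult h_sums) auto
  finally show ?thesis .
qed

definition tail_const :: "nat \<Rightarrow> real \<Rightarrow> real" where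
  "tail_const d a = 2 * real d * 3 ^ (d - 1) * (2 powr (1 + a) / a)"

lemma tail_const_nonneg: "0 < a \<Longrightarrow> 0 \<le> tail_const d a"
  by (simp add: tail_const_def)

lemma exists_decay_rate:
  fixes a \<delta> \<epsilon> :: real
  assumes "0 \<le> a" and "0 < \<delta>" and "0 < \<epsilon>"
  shows "\<exists>r>0. \<forall>x\<ge>\<delta>. (x + a) * r powr x \<le> \<epsilon>"
proof (intro exI conjI allI impI)
  define L where "L = (1 + a) / (\<epsilon> * \<delta>)"
  have L_nonneg: "0 \<le> L"
    using assms by (simp add: L_def)
  show "0 < exp (- (L + 1))"
    by simp
  fix x :: real assume "\<delta> \<le> x"
  then have x: "0 < x"
    using assms(2) by linarith
  have "x \<le> exp x"
    using exp_ge_add_one_self[of x] by linarith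
  then have "x * exp (- x) \<le> 1"
    by (simp add: exp_minus field_simps)
  moreover have "exp (- x) \<le> 1"
    using x by simp
  ultimately have "(x + a) * exp (- x) \<le> 1 + a"
    using assms(1) by (simp add: distrib_right add_mono mult_left_le)
  moreover have "exp (- (L + 1)) powr x = exp (- x) * exp (- (L * x))"
    by (simp add: powr_def algebra_simps flip: exp_add)
  ultimately have "(x + a) * exp (- (L + 1)) powr x \<le> (1 + a) * exp (- (L * x))"
    by (simp add: mult_right_mono flip: mult.assoc)
  also have "\<dots> \<le> (1 + a) * exp (- (L * \<delta>))"
    using \<open>\<delta> \<le> x\<close> assms L_nonneg by (intro mult_left_mono) (auto intro: mult_left_mono)
  also have "exp (- (L * \<delta>)) \<le> \<epsilon> / (1 + a)"
  proof -
    have "L * \<delta> = (1 + a) / \<epsilon>"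
      using assms by (simp add: L_def)
    moreover have "(1 + a) / \<epsilon> \<le> exp ((1 + a) / \<epsilon>)"
      using exp_ge_add_one_self[of "(1 + a) / \<epsilon>"] by linarith
    ultimately show ?thesis
      using assms by (simp only:) (simp add: exp_minus field_simps)
  qed
  finally show "(x + a) * exp (- (L + 1)) powr x \<le> \<epsilon>"
    using assms(1) by (simp add: mult_left_mono)
qed

text \<open>
  K does not depend on d; this is why the constant of the subcritical case depends only on
  s, p and \<delta>.
\<close>

lemma exists_uniform_cube_size:
  fixes a \<delta> \<theta> :: real
  assumes "0 < a" and "0 < \<delta>" and "0 < \<theta>"
  shows "\<exists>K>0. \<forall>d. \<delta> \<le> real d - a \<longrightarrow> tail_const d a * (real K + 1) powr a / real K ^ d \<le> \<theta>"
proof -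
  define B where "B = 2 / 3 * (2 powr (1 + a) / a) * 6 powr a"
  have B: "0 < B"
    using assms by (simp add: B_def)
  obtain r where r: "0 < r" and decay: "\<And>x. \<delta> \<le> x \<Longrightarrow> (x + a) * r powr x \<le> \<theta> / B"
    using exists_decay_rate[of a \<delta> "\<theta> / B"] assms B by auto
  define K where "K = nat \<lceil>3 / r\<rceil> + 1"
  have K: "0 < K" and "3 / r \<le> real K"
    unfolding K_def by linarith+
  define \<rho> where "\<rho> = 3 / real K"
  have \<rho>: "0 < \<rho>" "\<rho> \<le> r" "\<rho> * (real K + 1) \<le> 6"
    using K \<open>3 / r \<le> real K\<close> r by (auto simp: \<rho>_def field_simps)
  show ?thesis
  proof (intro exI[of _ K] conjI allI impI K)
    fix d :: nat assume d: "\<delta> \<le> real d - a"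
    define x where "x = real d - a"
    have "0 < d"
      using d assms by (cases d) auto
    then have "tail_const d a * (real K + 1) powr a / real K ^ d
        = 2 / 3 * (2 powr (1 + a) / a) * real d * (\<rho> ^ d * (real K + 1) powr a)"
      using K assms(1) by (cases d) (simp_all add: tail_const_def \<rho>_def power_divide field_simps)
    also have "\<rho> ^ d * (real K + 1) powr a = \<rho> powr x * (\<rho> * (real K + 1)) powr a"
      using \<rho> by (simp add: x_def powr_mult powr_realpow[symmetric] flip: powr_add)
    finally have eq: "tail_const d a * (real K + 1) powr a / real K ^ d
        = 2 / 3 * (2 powr (1 + a) / a) * real d * (\<rho> powr x * (\<rho> * (real K + 1)) powr a)" .
    have "\<rho> powr x * (\<rho> * (real K + 1)) powr a \<le> r powr x * 6 powr a"
      using \<rho> d assms by (intro mult_mono powr_mono2) (auto simp: x_def)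
    then have "tail_const d a * (real K + 1) powr a / real K ^ d
        \<le> 2 / 3 * (2 powr (1 + a) / a) * real d * (r powr x * 6 powr a)"
      unfolding eq using assms by (intro mult_left_mono) auto
    also have "\<dots> = B * ((x + a) * r powr x)"
      by (simp add: B_def x_def)
    also have "\<dots> \<le> \<theta>"
      using decay[of x] d B by (simp add: x_def field_simps)
    finally show "tail_const d a * (real K + 1) powr a / real K ^ d \<le> \<theta>" .
  qed
qed

lemma exists_nat_mult_powr_le:
  fixes c e \<theta> :: real
  assumes "e < 0" and "0 < \<theta>"
  shows "\<exists>K>0. c * real K powr e \<le> \<theta>"
proof -
  have "(\<lambda>K. c * real K powr e) \<longlonglongrightarrow> c * 0"
    using assms by (intro tendsto_mult tendsto_const tendsto_neg_powr filterlim_real_sequentially) auto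
  then have "eventually (\<lambda>K. c * real K powr e < \<theta>) sequentially"
    using assms by (auto dest: order_tendstoD)
  then obtain K where K: "\<And>n. K \<le> n \<Longrightarrow> c * real n powr e < \<theta>"
    by (auto simp: eventually_sequentially)
  have "c * real (Suc K) powr e \<le> \<theta>"
    using K[of "Suc K"] by (intro less_imp_le) simp
  then show ?thesis
    by (intro exI[of _ "Suc K"]) simp
qed

section \<open>Sup-norm geometry of the integer lattice\<close>

definition supnorm_nat :: "nat \<Rightarrow> (nat \<Rightarrow> int) \<Rightarrow> nat" where
  "supnorm_nat d j = nat (MAX i\<in>{..<d}. \<bar>j i\<bar>)"

lemma abs_le_supnorm_nat: "i < d \<Longrightarrow> \<bar>j i\<bar> \<le> int (supnorm_nat d j)"
proof -
  assume "i < d"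
  then have "\<bar>j i\<bar> \<le> (MAX i\<in>{..<d}. \<bar>j i\<bar>)" by (intro Max_ge) auto
  then show ?thesis unfolding supnorm_nat_def by linarith
qed

lemma supnorm_nat_le_iff: "0 < d \<Longrightarrow> supnorm_nat d j \<le> q \<longleftrightarrow> (\<forall>i<d. \<bar>j i\<bar> \<le> int q)"
  unfolding supnorm_nat_def by (subst nat_le_iff, subst Max_le_iff) auto

lemma supnorm_eq_supnorm_nat: "0 < d \<Longrightarrow> supnorm d j = real (supnorm_nat d j)"
proof -
  assume "0 < d"
  then have "0 \<le> (MAX i\<in>{..<d}. \<bar>j i\<bar>)" by (intro Max.coboundedI[THEN order_trans[rotated]]) auto
  then show ?thesis unfolding supnorm_def supnorm_nat_def by simp
qed

lemma supnorm_nat_eq_0_iff: "0 < d \<Longrightarrow> j \<in> Zfull d \<Longrightarrow> supnorm_nat d j = 0 \<longleftrightarrow> j = zpt"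
  by (auto simp: supnorm_nat_le_iff[where q = 0, simplified] Zfull_def zpt_def fun_eq_iff
      dest: leI)

lemma supnorm_nat_diff_le:
  assumes "0 < d"
  shows "supnorm_nat d (\<lambda>i. j i - m i) \<le> supnorm_nat d j + supnorm_nat d m"
proof -
  have "\<bar>j i - m i\<bar> \<le> int (supnorm_nat d j + supnorm_nat d m)" if "i < d" for i
    using abs_le_supnorm_nat[OF that, of j] abs_le_supnorm_nat[OF that, of m]
      abs_triangle_ineq4[of "j i" "m i"] by simp
  then show ?thesis
    by (simp add: supnorm_nat_le_iff[OF assms])
qed

definition lattice_box :: "nat \<Rightarrow> int set \<Rightarrow> (nat \<Rightarrow> int) set" where
  "lattice_box d S = {j. (\<forall>i\<ge>d. j i = 0) \<and> (\<forall>i<d. j i \<in> S)}"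

lemma bij_betw_restrict_lattice_box: "bij_betw (\<lambda>j. restrict j {..<d}) (lattice_box d S) (PiE {..<d} (\<lambda>_. S))"
proof (rule bij_betw_byWitness[where f' = "\<lambda>f i. if i < d then f i else 0"])
qed (auto simp: lattice_box_def fun_eq_iff PiE_def extensional_def)

lemma
  assumes "finite S"
  shows finite_lattice_box: "finite (lattice_box d S)" and card_lattice_box: "card (lattice_box d S) = card S ^ d"
  using bij_betw_finite[OF bij_betw_restrict_lattice_box] bij_betw_same_card[OF bij_betw_restrict_lattice_box]
    assms by (auto simp: card_PiE finite_PiE)

lemma power_diff_le_mult_power:
  fixes x y :: real
  assumes "0 \<le> y" "y \<le> x"
  shows "x ^ n - y ^ n \<le> n * (x - y) * x ^ (n - 1)"
proof (induction n)
  case (Suc n)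
  have "x ^ Suc n - y ^ Suc n = x * (x ^ n - y ^ n) + (x - y) * y ^ n"
    by (simp add: algebra_simps)
  also have "\<dots> \<le> x * (n * (x - y) * x ^ (n - 1)) + (x - y) * x ^ n"
    using Suc assms by (intro add_mono mult_left_mono power_mono) auto
  also have "\<dots> = Suc n * (x - y) * x ^ n"
    by (cases n) (simp_all add: algebra_simps)
  finally show ?case by simp
qed simp

lemma Zfull_ball_eq:
  "0 < d \<Longrightarrow> {m \<in> Zfull d. supnorm_nat d m \<le> q} = lattice_box d {-int q..int q}"
  by (auto simp: Zfull_def lattice_box_def supnorm_nat_le_iff abs_le_iff)

lemma Zplus_ball_eq:
  assumes "0 < d"
  shows "{m \<in> Zplus d. supnorm_nat d m \<le> q} = lattice_box d {0..int q}"
proof -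
  have "0 \<le> m i" if "m \<in> lattice_box d {0..int q}" for m i
    using that by (cases "i < d") (auto simp: lattice_box_def)
  then show ?thesis
    using assms by (auto simp: Zplus_def lattice_box_def supnorm_nat_le_iff)
qed

lemma card_level_set_eq_diff:
  fixes h :: "'a \<Rightarrow> nat"
  assumes "finite {m \<in> L. h m \<le> n}" "0 < n"
  shows "card {m \<in> L. h m = n} = card {m \<in> L. h m \<le> n} - card {m \<in> L. h m \<le> n - 1}"
proof -
  have sub: "{m \<in> L. h m \<le> n - 1} \<subseteq> {m \<in> L. h m \<le> n}"
    by auto
  have "{m \<in> L. h m = n} = {m \<in> L. h m \<le> n} - {m \<in> L. h m \<le> n - 1}"
    using assms(2) by auto
  then show ?thesis
    using card_Diff_subset[OF finite_subset[OF sub assms(1)] sub] by simp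
qed

text \<open>
  The cube j + sgn(j) [0, K]^d: its points are at least as far from the origin as j, and it stays
  in \<^const>\<open>Zplus\<close> when j does.
\<close>

definition outward_cube :: "nat \<Rightarrow> (nat \<Rightarrow> int) \<Rightarrow> nat \<Rightarrow> (nat \<Rightarrow> int) set" where
  "outward_cube d j K =
     (\<lambda>t i. if j i < 0 then j i - t i else j i + t i) ` lattice_box d {0..int K}"

lemma card_outward_cube: "card (outward_cube d j K) = (K + 1) ^ d"
proof -
  have "inj_on (\<lambda>t i. if j i < 0 then j i - t i else j i + t i) (lattice_box d {0..int K})"
    by (rule inj_onI) (auto simp: fun_eq_iff split: if_splits)
  moreover have "card {0..int K} = K + 1"
    by simp
  ultimately show ?thesis
    by (simp add: outward_cube_def card_image card_lattice_box)
qed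

lemma outward_cube_memD:
  assumes "m \<in> outward_cube d j K"
  shows "d \<le> i \<Longrightarrow> m i = j i" and "\<bar>m i\<bar> = \<bar>j i\<bar> + \<bar>j i - m i\<bar>"
    and "\<bar>j i - m i\<bar> \<le> int K" and "0 \<le> j i \<Longrightarrow> j i \<le> m i"
proof -
  obtain t where t: "t \<in> lattice_box d {0..int K}"
    and m: "m i = (if j i < 0 then j i - t i else j i + t i)"
    using assms by (auto simp: outward_cube_def)
  have "0 \<le> t i \<and> t i \<le> int K \<and> (d \<le> i \<longrightarrow> t i = 0)"
    using t by (cases "i < d") (auto simp: lattice_box_def)
  then show "d \<le> i \<Longrightarrow> m i = j i" and "\<bar>m i\<bar> = \<bar>j i\<bar> + \<bar>j i - m i\<bar>"
    and "\<bar>j i - m i\<bar> \<le> int K" and "0 \<le> j i \<Longrightarrow> j i \<le> m i"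
    unfolding m by auto
qed

lemma outward_cube_subset_Zfull: "j \<in> Zfull d \<Longrightarrow> outward_cube d j K \<subseteq> Zfull d"
  using outward_cube_memD(1)[of _ d j K] by (auto simp: Zfull_def)

lemma outward_cube_subset_Zplus: "j \<in> Zplus d \<Longrightarrow> outward_cube d j K \<subseteq> Zplus d"
  using outward_cube_memD(1,4)[of _ d j K] by (auto simp: Zfull_def Zplus_def) (meson order_trans)

lemma supnorm_nat_outward_cube:
  assumes "0 < d" and m: "m \<in> outward_cube d j K"
  shows "supnorm_nat d j \<le> supnorm_nat d m" and "supnorm_nat d m \<le> supnorm_nat d j + K"
    and "supnorm_nat d (\<lambda>i. j i - m i) \<le> K"
proof -
  have "\<bar>j i\<bar> \<le> int (supnorm_nat d m) \<and> \<bar>m i\<bar> \<le> int (supnorm_nat d j + K) \<and> \<bar>j i - m i\<bar> \<le> int K"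
    if "i < d" for i
    using that abs_le_supnorm_nat[of i d j] abs_le_supnorm_nat[of i d m]
      outward_cube_memD(2,3)[OF m, of i] by linarith
  then show "supnorm_nat d j \<le> supnorm_nat d m" and "supnorm_nat d m \<le> supnorm_nat d j + K"
    and "supnorm_nat d (\<lambda>i. j i - m i) \<le> K"
    by (simp_all add: supnorm_nat_le_iff[OF assms(1)])
qed

section \<open>Hardy domains\<close>

text \<open>
  For \<^const>\<open>Zfull\<close> the sphere bound is (2n + 1)^d - (2n - 1)^d \<le> 2d (2n + 1)^(d-1) \<le> 2d (3n)^(d-1).
\<close>

locale hardy_domain =
  fixes d :: nat and L :: "(nat \<Rightarrow> int) set"
  assumes dim_pos: "0 < d"
    and domain_subset: "L \<subseteq> Zfull d"
    and zero_in_domain: "zpt \<in> L"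
    and finite_ball: "finite {m \<in> L. supnorm_nat d m \<le> q}"
    and card_ball: "(q + 1) ^ d \<le> card {m \<in> L. supnorm_nat d m \<le> q}"
    and card_sphere: "0 < n \<Longrightarrow> card {m \<in> L. supnorm_nat d m = n} \<le> 2 * d * (3 * n) ^ (d - 1)"
    and outward_cube_closed: "j \<in> L \<Longrightarrow> outward_cube d j K \<subseteq> L"

lemma hardy_domain_Zfull:
  assumes "0 < d"
  shows "hardy_domain d (Zfull d)"
proof
  fix q n :: nat
  have ball: "{m \<in> Zfull d. supnorm_nat d m \<le> q} = lattice_box d {-int q..int q}" for q
    using assms by (rule Zfull_ball_eq)
  have card_ball: "card {m \<in> Zfull d. supnorm_nat d m \<le> q} = (2 * q + 1) ^ d" for q
    unfolding ball by (simp add: card_lattice_box nat_add_distrib nat_mult_distrib)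
  have fin: "finite {m \<in> Zfull d. supnorm_nat d m \<le> q}" for q
    unfolding ball by (simp add: finite_lattice_box)
  show "finite {m \<in> Zfull d. supnorm_nat d m \<le> q}"
    by (rule fin)
  show "(q + 1) ^ d \<le> card {m \<in> Zfull d. supnorm_nat d m \<le> q}"
    unfolding card_ball by (simp add: power_mono)
  assume "0 < n"
  have "card {m \<in> Zfull d. supnorm_nat d m = n} = (2 * n + 1) ^ d - (2 * (n - 1) + 1) ^ d"
    using card_level_set_eq_diff[OF fin \<open>0 < n\<close>] unfolding card_ball .
  then have "real (card {m \<in> Zfull d. supnorm_nat d m = n}) = (2 * real n + 1) ^ d - (2 * real n - 1) ^ d"
    using \<open>0 < n\<close> by (simp add: power_mono add.commute)
  also have "\<dots> \<le> d * 2 * (2 * real n + 1) ^ (d - 1)"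
    using power_diff_le_mult_power[of "2 * real n - 1" "2 * real n + 1" d] \<open>0 < n\<close> by simp
  also have "\<dots> \<le> d * 2 * (3 * real n) ^ (d - 1)"
    using \<open>0 < n\<close> by (intro mult_left_mono power_mono) auto
  finally have "real (card {m \<in> Zfull d. supnorm_nat d m = n}) \<le> real (2 * d * (3 * n) ^ (d - 1))"
    by (simp add: mult_ac)
  then show "card {m \<in> Zfull d. supnorm_nat d m = n} \<le> 2 * d * (3 * n) ^ (d - 1)"
    by (simp only: of_nat_le_iff)
qed (use assms outward_cube_subset_Zfull in \<open>auto simp: Zfull_def zpt_def\<close>)

lemma hardy_domain_Zplus:
  assumes "0 < d"
  shows "hardy_domain d (Zplus d)"
proof
  fix q n :: nat
  have ball: "{m \<in> Zplus d. supnorm_nat d m \<le> q} = lattice_box d {0..int q}" for q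
    using assms by (rule Zplus_ball_eq)
  have card_ball: "card {m \<in> Zplus d. supnorm_nat d m \<le> q} = (q + 1) ^ d" for q
    unfolding ball by (simp add: card_lattice_box nat_add_distrib)
  have fin: "finite {m \<in> Zplus d. supnorm_nat d m \<le> q}" for q
    unfolding ball by (simp add: finite_lattice_box)
  show "finite {m \<in> Zplus d. supnorm_nat d m \<le> q}"
    by (rule fin)
  show "(q + 1) ^ d \<le> card {m \<in> Zplus d. supnorm_nat d m \<le> q}"
    unfolding card_ball by simp
  assume "0 < n"
  have "card {m \<in> Zplus d. supnorm_nat d m = n} = (n + 1) ^ d - (n - 1 + 1) ^ d"
    using card_level_set_eq_diff[OF fin \<open>0 < n\<close>] unfolding card_ball .
  then have "real (card {m \<in> Zplus d. supnorm_nat d m = n}) = (real n + 1) ^ d - real n ^ d"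
    using \<open>0 < n\<close> by (simp add: power_mono add.commute)
  also have "\<dots> \<le> d * (real n + 1) ^ (d - 1)"
    using power_diff_le_mult_power[of "real n" "real n + 1" d] by simp
  also have "\<dots> \<le> 2 * d * (3 * real n) ^ (d - 1)"
    using \<open>0 < n\<close> by (intro mult_mono power_mono) auto
  finally have "real (card {m \<in> Zplus d. supnorm_nat d m = n}) \<le> real (2 * d * (3 * n) ^ (d - 1))"
    by (simp add: mult_ac)
  then show "card {m \<in> Zplus d. supnorm_nat d m = n} \<le> 2 * d * (3 * n) ^ (d - 1)"
    by (simp only: of_nat_le_iff)
qed (use assms outward_cube_subset_Zplus in \<open>auto simp: Zplus_def Zfull_def zpt_def\<close>)

context hardy_domain
begin

lemma supnorm_eq: "supnorm d j = real (supnorm_nat d j)"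
  using dim_pos by (rule supnorm_eq_supnorm_nat)

lemma supnorm_nat_zero [simp]: "supnorm_nat d zpt = 0"
  using supnorm_nat_eq_0_iff[OF dim_pos] by (simp add: Zfull_def zpt_def)

lemma countable_domain: "countable L"
proof -
  have "countable (\<Union>q. {m \<in> L. supnorm_nat d m \<le> q})"
    by (rule countable_UN) (auto intro: countable_finite finite_ball)
  moreover have "L = (\<Union>q. {m \<in> L. supnorm_nat d m \<le> q})"
    by auto
  ultimately show ?thesis
    by simp
qed

lemma supnorm_nat_pos: "j \<in> L \<Longrightarrow> j \<noteq> zpt \<Longrightarrow> 0 < supnorm_nat d j"
  using supnorm_nat_eq_0_iff[OF dim_pos] domain_subset by blast

lemma supnorm_nat_diff_pos:
  assumes "j \<in> L" "m \<in> L" "j \<noteq> m"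
  shows "0 < supnorm_nat d (\<lambda>i. j i - m i)"
proof -
  have "j \<in> Zfull d" and "m \<in> Zfull d"
    using assms domain_subset by auto
  then have "(\<lambda>i. j i - m i) \<in> Zfull d"
    by (simp add: Zfull_def)
  moreover have "(\<lambda>i. j i - m i) \<noteq> zpt"
    using assms(3) by (auto simp: zpt_def fun_eq_iff)
  ultimately show ?thesis
    using supnorm_nat_eq_0_iff[OF dim_pos] by blast
qed

lemma finite_sphere: "finite {m \<in> L. supnorm_nat d m = n}"
  by (rule finite_subset[OF _ finite_ball[of n]]) auto

lemma card_sphere_mult_powr_le:
  fixes a :: real
  assumes "0 < n"
  shows "real (card {m \<in> L. supnorm_nat d m = n}) * real n powr - (a + d)
    \<le> 2 * real d * 3 ^ (d - 1) * real n powr - (1 + a)"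
proof -
  have "real (card {m \<in> L. supnorm_nat d m = n}) \<le> real (2 * d * (3 * n) ^ (d - 1))"
    using card_sphere[OF assms] by (simp only: of_nat_le_iff)
  then have "real (card {m \<in> L. supnorm_nat d m = n}) * real n powr - (a + d)
      \<le> real (2 * d * (3 * n) ^ (d - 1)) * real n powr - (a + d)"
    by (rule mult_right_mono) simp
  also have "\<dots> = 2 * real d * 3 ^ (d - 1) * (real n ^ (d - 1) * real n powr - (a + d))"
    by (simp add: power_mult_distrib)
  also have "real n ^ (d - 1) = real n powr (real d - 1)"
    using powr_realpow[of "real n" "d - 1"] assms dim_pos by (simp add: of_nat_diff)
  also have "real n powr (real d - 1) * real n powr - (a + d) = real n powr - (1 + a)"
    by (subst powr_add[symmetric]) simp
  finally show ?thesis .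
qed

lemma radial_tail_bound:
  fixes a :: real and N :: nat
  assumes "0 < a" and "0 < N"
  shows "(\<integral>\<^sup>+j. (if N \<le> supnorm_nat d j then ennreal (real (supnorm_nat d j) powr - (a + d)) else 0)
      \<partial>count_space L) \<le> ennreal (tail_const d a * real N powr - a)"
proof -
  define g where "g n = (if N \<le> n then ennreal (real n powr - (a + d)) else 0)" for n
  have sphere_term: "of_nat (card {m \<in> L. supnorm_nat d m = n}) * g n
      \<le> ennreal (2 * real d * 3 ^ (d - 1)) * (if N \<le> n then ennreal (real n powr - (1 + a)) else 0)" for n
    using card_sphere_mult_powr_le[of n a] assms(2)
    by (simp add: g_def ennreal_of_nat_eq_real_of_nat flip: ennreal_mult)
  have "(\<integral>\<^sup>+j. g (supnorm_nat d j) \<partial>count_space L)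
      = (\<Sum>n. of_nat (card {m \<in> L. supnorm_nat d m = n}) * g n)"
    using finite_sphere by (rule nn_integral_count_space_level_sets)
  also have "\<dots> \<le> (\<Sum>n. ennreal (2 * real d * 3 ^ (d - 1)) *
      (if N \<le> n then ennreal (real n powr - (1 + a)) else 0))"
    by (intro suminf_le summableI sphere_term)
  also have "\<dots> \<le> ennreal (2 * real d * 3 ^ (d - 1)) * ennreal (2 powr (1 + a) / a * real N powr - a)"
    using suminf_powr_tail_le[OF assms] by (simp add: mult_left_mono)
  also have "\<dots> = ennreal (2 * real d * 3 ^ (d - 1) * (2 powr (1 + a) / a * real N powr - a))"
    by (rule ennreal_mult'[symmetric]) simp
  also have "\<dots> = ennreal (tail_const d a * real N powr - a)"
    by (simp add: tail_const_def mult_ac)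
  finally show ?thesis
    by (simp add: g_def)
qed

lemma dual_sum_bound:
  fixes a \<kappa> :: real and N :: nat and f :: "(nat \<Rightarrow> int) \<Rightarrow> real"
  assumes "0 < a" "0 < N" "I \<subseteq> L" "0 \<le> \<kappa>"
    and f: "\<And>j. j \<in> I \<Longrightarrow> m \<in> T j \<Longrightarrow> N \<le> supnorm_nat d j \<and> f j \<le> \<kappa> * real (supnorm_nat d j) powr - (a + d)"
  shows "(\<integral>\<^sup>+j. (if m \<in> T j then ennreal (f j) else 0) \<partial>count_space I)
    \<le> ennreal (\<kappa> * (tail_const d a * real N powr - a))"
proof -
  have "(\<integral>\<^sup>+j. (if m \<in> T j then ennreal (f j) else 0) \<partial>count_space I)
      \<le> (\<integral>\<^sup>+j. ennreal \<kappa> * (if N \<le> supnorm_nat d j then ennreal (real (supnorm_nat d j) powr - (a + d)) else 0)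
          \<partial>count_space I)"
    using f assms(4) by (intro nn_integral_mono) (auto simp flip: ennreal_mult' intro: ennreal_leI)
  also have "\<dots> \<le> (\<integral>\<^sup>+j. ennreal \<kappa> * (if N \<le> supnorm_nat d j then ennreal (real (supnorm_nat d j) powr - (a + d)) else 0)
          \<partial>count_space L)"
    using assms(3) by (rule nn_integral_count_space_mono_set)
  also have "\<dots> \<le> ennreal \<kappa> * ennreal (tail_const d a * real N powr - a)"
    using radial_tail_bound[OF assms(1,2)] by (simp add: nn_integral_cmult mult_left_mono)
  also have "\<dots> = ennreal (\<kappa> * (tail_const d a * real N powr - a))"
    using assms(4) by (rule ennreal_mult'[symmetric])
  finally show ?thesis .
qed

section \<open>The subcritical and supercritical regimes\<close>

lemma outward_cube_kernel_bound:
  fixes a :: real and K :: nat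
  assumes "0 < a" and "0 < K" and j: "j \<in> L" "j \<noteq> zpt"
    and m: "m \<in> outward_cube d j (K * supnorm_nat d j)"
  shows "supnorm d (\<lambda>i. j i - m i) powr (a + d)
    \<le> real K powr a * supnorm d j powr a * card (outward_cube d j (K * supnorm_nat d j))"
proof -
  let ?n = "supnorm_nat d"
  have "real (?n (\<lambda>i. j i - m i)) \<le> real K * real (?n j)"
    using supnorm_nat_outward_cube(3)[OF dim_pos m] of_nat_mono[where 'a = real] by fastforce
  then have "supnorm d (\<lambda>i. j i - m i) powr (a + d) \<le> (real K * real (?n j)) powr (a + d)"
    using assms(1) by (simp add: supnorm_eq powr_mono2)
  also have "\<dots> = real K powr a * real (?n j) powr a * (real K * real (?n j)) ^ d"
    using assms(2) supnorm_nat_pos[OF j]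
    by (simp add: powr_add powr_mult powr_realpow power_mult_distrib)
  also have "\<dots> \<le> real K powr a * supnorm d j powr a * card (outward_cube d j (K * ?n j))"
    by (simp add: supnorm_eq card_outward_cube mult_left_mono power_mono)
  finally show ?thesis .
qed

lemma outward_cube_weight_bound:
  fixes a :: real and K :: nat
  assumes K: "0 < K" and j: "j \<in> L" "j \<noteq> zpt"
  shows "1 / (supnorm d j powr a * card (outward_cube d j (K * supnorm_nat d j)))
    \<le> 1 / real K ^ d * real (supnorm_nat d j) powr - (a + d)"
proof -
  let ?n = "supnorm_nat d"
  have X: "0 < real K ^ d * real (?n j) powr (a + d)"
    using K supnorm_nat_pos[OF j] by simp
  have "real K ^ d * real (?n j) powr (a + d) \<le> supnorm d j powr a * real ((K * ?n j + 1) ^ d)"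
    using supnorm_nat_pos[OF j] by (simp add: supnorm_eq powr_add powr_realpow
      power_mult_distrib[symmetric] power_mono mult_left_mono mult.commute)
  then have "1 / (supnorm d j powr a * card (outward_cube d j (K * ?n j)))
      \<le> 1 / (real K ^ d * real (?n j) powr (a + d))"
    by (intro divide_left_mono mult_pos_pos less_le_trans[OF X]) (auto simp: card_outward_cube)
  also have "\<dots> = 1 / real K ^ d * real (?n j) powr - (a + d)"
    using powr_minus[of "real (?n j)" "a + d"] by (simp add: divide_inverse)
  finally show ?thesis .
qed

lemma outward_cube_dual_bound:
  fixes a \<theta> :: real and K :: nat
  assumes a: "0 < a" and K: "0 < K"
    and K_large: "tail_const d a * (real K + 1) powr a / real K ^ d \<le> \<theta>"
    and m: "m \<in> L" "m \<noteq> zpt"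
  shows "(\<integral>\<^sup>+j. (if m \<in> outward_cube d j (K * supnorm_nat d j)
      then ennreal (1 / (supnorm d j powr a * card (outward_cube d j (K * supnorm_nat d j)))) else 0)
      \<partial>count_space (L - {zpt})) \<le> ennreal (\<theta> / supnorm d m powr a)"
proof -
  let ?n = "supnorm_nat d"
  define M where "M = ?n m"
  define N where "N = nat \<lceil>real M / (real K + 1)\<rceil>"
  have M: "0 < M"
    using supnorm_nat_pos[OF m] by (simp add: M_def)
  then have N: "0 < N" and N_ge: "real M / (real K + 1) \<le> real N"
    unfolding N_def by (simp_all add: divide_pos_pos)
  have "(\<integral>\<^sup>+j. (if m \<in> outward_cube d j (K * ?n j)
      then ennreal (1 / (supnorm d j powr a * card (outward_cube d j (K * ?n j)))) else 0)
      \<partial>count_space (L - {zpt}))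
      \<le> ennreal (1 / real K ^ d * (tail_const d a * real N powr - a))"
  proof (intro dual_sum_bound a N)
    fix j assume j: "j \<in> L - {zpt}" and "m \<in> outward_cube d j (K * ?n j)"
    then have "real M \<le> (real K + 1) * real (?n j)"
      using supnorm_nat_outward_cube(2)[OF dim_pos] by (force simp: M_def algebra_simps
        simp flip: of_nat_mult of_nat_add)
    then have "N \<le> ?n j"
      unfolding N_def using K by (simp add: nat_le_iff ceiling_le_iff field_simps)
    then show "N \<le> ?n j \<and> 1 / (supnorm d j powr a * card (outward_cube d j (K * ?n j)))
        \<le> 1 / real K ^ d * real (?n j) powr - (a + d)"
      using outward_cube_weight_bound[OF K] j by simp
  qed auto
  also have "\<dots> \<le> ennreal (\<theta> / supnorm d m powr a)"
  proof (intro ennreal_leI)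
    have "real N powr - a \<le> (real M / (real K + 1)) powr - a"
      using N_ge M a by (intro powr_mono2') auto
    also have "\<dots> = (real K + 1) powr a / real M powr a"
      using M by (simp add: powr_minus powr_divide)
    finally have "1 / real K ^ d * (tail_const d a * real N powr - a)
        \<le> 1 / real K ^ d * (tail_const d a * ((real K + 1) powr a / real M powr a))"
      using tail_const_nonneg[OF a] by (intro mult_left_mono) auto
    also have "\<dots> = tail_const d a * (real K + 1) powr a / real K ^ d / real M powr a"
      by simp
    also have "\<dots> \<le> \<theta> / real M powr a"
      by (rule divide_right_mono[OF K_large]) simp
    finally show "1 / real K ^ d * (tail_const d a * real N powr - a) \<le> \<theta> / supnorm d m powr a"
      by (simp add: M_def supnorm_eq)
  qed
  finally show ?thesis .
qed

lemma hardy_subcritical: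
  fixes a p :: real and K :: nat
  assumes a: "0 < a" and p: "0 < p" and K: "0 < K"
    and K_large: "tail_const d a * (real K + 1) powr a / real K ^ d \<le> 1 / (2 * 2 powr p)"
    and finite: "hardy_lhs L d p a u < \<infinity>"
  shows "hardy_lhs L d p a u \<le> ennreal (2 * 2 powr p * real K powr a) * hardy_rhs (L - {zpt}) d p (a + d) u"
proof -
  let ?T = "\<lambda>j. outward_cube d j (K * supnorm_nat d j)"
  have T_sub: "?T j \<subseteq> L - {zpt}" if "j \<in> L - {zpt}" for j
    using that outward_cube_closed supnorm_nat_pos supnorm_nat_outward_cube(1)[OF dim_pos]
    by fastforce
  have "(\<integral>\<^sup>+j. ennreal (cmod (u j) powr p / supnorm d j powr a) \<partial>count_space (L - {zpt}))
      \<le> ennreal (2 * 2 powr p * real K powr a) *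
        (\<integral>\<^sup>+j. \<integral>\<^sup>+m. ennreal (cmod (u j - u m) powr p / supnorm d (\<lambda>i. j i - m i) powr (a + d))
          \<partial>count_space (L - {zpt} - {j}) \<partial>count_space (L - {zpt}))"
  proof (rule averaging_absorbed[where W = "\<lambda>j. supnorm d j powr a" and T = ?T
      and k = "\<lambda>j m. supnorm d (\<lambda>i. j i - m i) powr (a + d)" and A = "real K powr a"
      and \<theta> = "1 / (2 * 2 powr p)"])
    show "countable (L - {zpt})"
      using countable_domain by simp
    show "0 < supnorm d j powr a" if "j \<in> L - {zpt}" for j
      using that supnorm_nat_pos by (simp add: supnorm_eq)
    show "?T j \<subseteq> L - {zpt} \<and> finite (?T j) \<and> ?T j \<noteq> {}" if "j \<in> L - {zpt}" for j
    proof -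
      have "0 < card (?T j)"
        by (simp add: card_outward_cube)
      then show ?thesis
        using T_sub[OF that] card_ge_0_finite by auto
    qed
    show "0 < supnorm d (\<lambda>i. j i - m i) powr (a + d) \<and>
        supnorm d (\<lambda>i. j i - m i) powr (a + d) \<le> real K powr a * supnorm d j powr a * card (?T j)"
      if "j \<in> L - {zpt}" "m \<in> ?T j" "m \<noteq> j" for j m
      using that T_sub supnorm_nat_diff_pos[of j m] outward_cube_kernel_bound[OF a K, of j m]
      by (auto simp: supnorm_eq)
    show "(\<integral>\<^sup>+j. (if m \<in> ?T j then ennreal (1 / (supnorm d j powr a * card (?T j))) else 0)
        \<partial>count_space (L - {zpt})) \<le> (if m \<in> L - {zpt} then ennreal (1 / (2 * 2 powr p) / supnorm d m powr a) else 0)"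
      if "m \<in> L - {zpt}" for m
      using that outward_cube_dual_bound[OF a K K_large, of m] by simp
    show "(\<integral>\<^sup>+j. ennreal (cmod (u j) powr p / supnorm d j powr a) \<partial>count_space (L - {zpt})) < \<infinity>"
      using finite by (simp add: hardy_lhs_def)
  qed (use p in auto)
  then show ?thesis
    by (simp add: hardy_lhs_def hardy_rhs_def)
qed

definition inner_ball :: "nat \<Rightarrow> (nat \<Rightarrow> int) \<Rightarrow> (nat \<Rightarrow> int) set" where
  "inner_ball K j = {m \<in> L. supnorm_nat d m \<le> supnorm_nat d j div K}"

lemma card_inner_ball:
  assumes "0 < K"
  shows "(real (supnorm_nat d j) / real K) ^ d \<le> card (inner_ball K j)"
proof -
  let ?n = "supnorm_nat d"
  have "?n j = K * (?n j div K) + ?n j mod K"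
    by simp
  moreover have "?n j mod K < K"
    using assms by simp
  moreover have "K * (?n j div K + 1) = K * (?n j div K) + K"
    by simp
  ultimately have "?n j < K * (?n j div K + 1)"
    by linarith
  then have "real (?n j) / real K \<le> real (?n j div K + 1)"
    using assms by (simp add: field_simps flip: of_nat_mult)
  then have "(real (?n j) / real K) ^ d \<le> real ((?n j div K + 1) ^ d)"
    by (simp add: power_mono)
  also have "\<dots> \<le> card (inner_ball K j)"
    using card_ball[of "?n j div K"] unfolding inner_ball_def by (simp only: of_nat_le_iff)
  finally show ?thesis .
qed

lemma supnorm_nat_le_if_inner_ball: "m \<in> inner_ball K j \<Longrightarrow> supnorm_nat d m \<le> supnorm_nat d j"
  using div_le_dividend[of "supnorm_nat d j" K] unfolding inner_ball_def by (blast intro: order_trans)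

lemma inner_ball_kernel_bound:
  fixes a :: real and K :: nat
  assumes "0 < a" and "0 < K" and j: "j \<in> L" "j \<noteq> zpt" and m: "m \<in> inner_ball K j"
  shows "supnorm d (\<lambda>i. j i - m i) powr (a + d)
    \<le> 2 powr (a + d) * real K ^ d * supnorm d j powr a * card (inner_ball K j)"
proof -
  let ?n = "supnorm_nat d"
  have "real (?n (\<lambda>i. j i - m i)) \<le> 2 * real (?n j)"
    using supnorm_nat_le_if_inner_ball[OF m] supnorm_nat_diff_le[OF dim_pos, of j m] by linarith
  then have "supnorm d (\<lambda>i. j i - m i) powr (a + d) \<le> (2 * real (?n j)) powr (a + d)"
    using assms(1) by (simp add: supnorm_eq powr_mono2)
  also have "\<dots> = 2 powr (a + d) * real K ^ d * real (?n j) powr a * (real (?n j) / real K) ^ d"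
    using assms(2) supnorm_nat_pos[OF j] by (simp add: powr_add powr_mult powr_realpow power_divide)
  also have "\<dots> \<le> 2 powr (a + d) * real K ^ d * supnorm d j powr a * card (inner_ball K j)"
    using card_inner_ball[OF assms(2), of j] by (simp add: supnorm_eq mult_left_mono)
  finally show ?thesis .
qed

lemma inner_ball_weight_bound:
  fixes a :: real and K :: nat
  assumes K: "0 < K" and j: "j \<in> L" "j \<noteq> zpt"
  shows "1 / (supnorm d j powr a * card (inner_ball K j)) \<le> real K ^ d * real (supnorm_nat d j) powr - (a + d)"
proof -
  let ?n = "supnorm_nat d"
  have n_pos: "0 < ?n j"
    using supnorm_nat_pos[OF j] .
  have X: "0 < real (?n j) powr a * (real (?n j) / real K) ^ d"
    using K n_pos by simp
  then have "1 / (supnorm d j powr a * card (inner_ball K j))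
      \<le> 1 / (real (?n j) powr a * (real (?n j) / real K) ^ d)"
    using card_inner_ball[OF K, of j] by (intro divide_left_mono mult_pos_pos less_le_trans[OF X])
      (auto simp: supnorm_eq mult_left_mono)
  also have "\<dots> = real K ^ d * real (?n j) powr - (a + d)"
    using n_pos powr_minus[of "real (?n j)" "a + d"]
    by (simp add: power_divide powr_add powr_realpow divide_inverse power_mult_distrib power_inverse)
  finally show ?thesis .
qed

lemma inner_ball_dual_bound:
  fixes a \<theta> :: real and K :: nat
  assumes a: "real d < a" and K: "0 < K"
    and K_large: "tail_const d a * real K powr (real d - a) \<le> \<theta>"
    and I: "I \<subseteq> L - {zpt}" and m: "m \<in> L" "m \<noteq> zpt"
  shows "(\<integral>\<^sup>+j. (if m \<in> inner_ball K j then ennreal (1 / (supnorm d j powr a * card (inner_ball K j))) else 0)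
      \<partial>count_space I) \<le> ennreal (\<theta> / supnorm d m powr a)"
proof -
  let ?n = "supnorm_nat d"
  define M where "M = ?n m"
  have M: "0 < M"
    using supnorm_nat_pos[OF m] by (simp add: M_def)
  have a_pos: "0 < a"
    using a by linarith
  have "(\<integral>\<^sup>+j. (if m \<in> inner_ball K j then ennreal (1 / (supnorm d j powr a * card (inner_ball K j))) else 0)
      \<partial>count_space I) \<le> ennreal (real K ^ d * (tail_const d a * real (K * M) powr - a))"
  proof (intro dual_sum_bound a_pos)
    fix j assume j: "j \<in> I" and "m \<in> inner_ball K j"
    then have KM: "K * M \<le> ?n j"
      using K by (simp add: M_def inner_ball_def less_eq_div_iff_mult_less_eq mult.commute)
    then show "K * M \<le> ?n j \<and> 1 / (supnorm d j powr a * card (inner_ball K j))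
        \<le> real K ^ d * real (?n j) powr - (a + d)"
      using inner_ball_weight_bound[OF K] j I by auto
  qed (use K M I in auto)
  also have "\<dots> \<le> ennreal (\<theta> / supnorm d m powr a)"
  proof (intro ennreal_leI)
    have "real K ^ d * (tail_const d a * real (K * M) powr - a)
        = tail_const d a * real K powr (real d - a) / real M powr a"
      using K M by (simp add: powr_mult powr_diff powr_realpow powr_minus divide_inverse)
    also have "\<dots> \<le> \<theta> / real M powr a"
      by (rule divide_right_mono[OF K_large]) simp
    finally show "real K ^ d * (tail_const d a * real (K * M) powr - a) \<le> \<theta> / supnorm d m powr a"
      by (simp add: M_def supnorm_eq)
  qed
  finally show ?thesis .
qed

lemma inner_ball_dual_bound_truncated:
  fixes a \<theta> :: real and K R :: nat
  assumes a: "real d < a" and K: "0 < K"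
    and K_large: "tail_const d a * real K powr (real d - a) \<le> \<theta>"
    and m: "m \<in> L" "m \<noteq> zpt"
  shows "(\<integral>\<^sup>+j. (if m \<in> inner_ball K j then ennreal (1 / (supnorm d j powr a * card (inner_ball K j))) else 0)
      \<partial>count_space {j \<in> L - {zpt}. supnorm_nat d j \<le> R})
    \<le> (if supnorm_nat d m \<le> R then ennreal (\<theta> / supnorm d m powr a) else 0)"
proof (cases "supnorm_nat d m \<le> R")
  case True
  then show ?thesis
    using inner_ball_dual_bound[OF a K K_large, of "{j \<in> L - {zpt}. supnorm_nat d j \<le> R}" m] m by auto
next
  case False
  then have "m \<notin> inner_ball K j" if "supnorm_nat d j \<le> R" for j
    using that supnorm_nat_le_if_inner_ball[of m K j] by auto
  then have "(\<integral>\<^sup>+j. (if m \<in> inner_ball K j then ennreal (1 / (supnorm d j powr a * card (inner_ball K j)))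
      else 0) \<partial>count_space {j \<in> L - {zpt}. supnorm_nat d j \<le> R})
      = (\<integral>\<^sup>+j. 0 \<partial>count_space {j \<in> L - {zpt}. supnorm_nat d j \<le> R})"
    by (intro nn_integral_cong) auto
  then show ?thesis
    using False by simp
qed

lemma hardy_supercritical_truncated:
  fixes a p :: real and K R :: nat
  assumes a: "real d < a" and p: "0 < p" and K: "0 < K"
    and K_large: "tail_const d a * real K powr (real d - a) \<le> 1 / (2 * 2 powr p)"
    and u0: "u zpt = 0"
  shows "(\<integral>\<^sup>+j. ennreal (cmod (u j) powr p / supnorm d j powr a)
      \<partial>count_space {j \<in> L - {zpt}. supnorm_nat d j \<le> R})
    \<le> ennreal (2 * 2 powr p * (2 powr (a + d) * real K ^ d)) * hardy_rhs L d p (a + d) u"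
proof -
  define I where "I = {j \<in> L - {zpt}. supnorm_nat d j \<le> R}"
  have "finite I"
    using finite_ball[of R] by (rule finite_subset[rotated]) (auto simp: I_def)
  have "(\<integral>\<^sup>+j. ennreal (cmod (u j) powr p / supnorm d j powr a) \<partial>count_space I)
      \<le> ennreal (2 * 2 powr p * (2 powr (a + d) * real K ^ d)) *
        (\<integral>\<^sup>+j. \<integral>\<^sup>+m. ennreal (cmod (u j - u m) powr p / supnorm d (\<lambda>i. j i - m i) powr (a + d))
          \<partial>count_space (L - {j}) \<partial>count_space I)"
  proof (rule averaging_absorbed[where W = "\<lambda>j. supnorm d j powr a" and T = "inner_ball K" and I = I
      and J = L and k = "\<lambda>j m. supnorm d (\<lambda>i. j i - m i) powr (a + d)"
      and A = "2 powr (a + d) * real K ^ d" and \<theta> = "1 / (2 * 2 powr p)"])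
    show "countable I"
      using \<open>finite I\<close> by (rule countable_finite)
    show "0 < supnorm d j powr a" if "j \<in> I" for j
      using that supnorm_nat_pos by (simp add: I_def supnorm_eq)
    show "inner_ball K j \<subseteq> L \<and> finite (inner_ball K j) \<and> inner_ball K j \<noteq> {}" for j
      using finite_ball zero_in_domain by (auto simp: inner_ball_def)
    show "0 < supnorm d (\<lambda>i. j i - m i) powr (a + d) \<and> supnorm d (\<lambda>i. j i - m i) powr (a + d)
        \<le> 2 powr (a + d) * real K ^ d * supnorm d j powr a * card (inner_ball K j)"
      if "j \<in> I" "m \<in> inner_ball K j" "m \<noteq> j" for j m
      using that supnorm_nat_diff_pos[of j m] inner_ball_kernel_bound[OF _ K, of a j m] a
      by (auto simp: I_def inner_ball_def supnorm_eq)
    show "(\<integral>\<^sup>+j. (if m \<in> inner_ball K j then ennreal (1 / (supnorm d j powr a * card (inner_ball K j))) else 0)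
        \<partial>count_space I) \<le> (if m \<in> I then ennreal (1 / (2 * 2 powr p) / supnorm d m powr a) else 0)"
      if "m \<in> L" "u m \<noteq> 0" for m
    proof -
      have "m \<noteq> zpt"
        using that u0 by auto
      then show ?thesis
        using that inner_ball_dual_bound_truncated[OF a K K_large \<open>m \<in> L\<close>, of R] by (simp add: I_def)
    qed
    show "(\<integral>\<^sup>+j. ennreal (cmod (u j) powr p / supnorm d j powr a) \<partial>count_space I) < \<infinity>"
      using \<open>finite I\<close> by (simp add: nn_integral_count_space_finite ennreal_sum_less_top)
  qed (use p in \<open>auto simp: I_def mult.assoc\<close>)
  also have "\<dots> \<le> ennreal (2 * 2 powr p * (2 powr (a + d) * real K ^ d)) * hardy_rhs L d p (a + d) u"
    unfolding hardy_rhs_def by (intro mult_left_mono nn_integral_count_space_mono_set) (auto simp: I_def)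
  finally show ?thesis
    by (simp add: I_def)
qed

lemma hardy_supercritical:
  fixes a p :: real
  assumes "real d < a" and "0 < p"
  shows "\<exists>c. \<forall>u. u zpt = 0 \<longrightarrow> hardy_lhs L d p a u \<le> ennreal c * hardy_rhs L d p (a + d) u"
proof -
  obtain K :: nat where K: "0 < K" "tail_const d a * real K powr (real d - a) \<le> 1 / (2 * 2 powr p)"
    using exists_nat_mult_powr_le[of "real d - a" "1 / (2 * 2 powr p)"] assms(1) by auto
  show ?thesis
  proof (intro exI allI impI)
    fix u :: "(nat \<Rightarrow> int) \<Rightarrow> complex" assume "u zpt = 0"
    then show "hardy_lhs L d p a u \<le> ennreal (2 * 2 powr p * (2 powr (a + d) * real K ^ d)) * hardy_rhs L d p (a + d) u"
      unfolding hardy_lhs_def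
      by (rule nn_integral_count_space_le_if_truncations_le[where h = "supnorm_nat d",
          OF hardy_supercritical_truncated[OF assms K]])
  qed
qed

lemma hardy_rhs_antimono:
  assumes "q \<le> q'"
  shows "hardy_rhs L d p q' u \<le> hardy_rhs L d p q u"
  unfolding hardy_rhs_def
proof (intro nn_integral_mono ennreal_leI)
  fix j m assume "j \<in> space (count_space L)" and "m \<in> space (count_space (L - {j}))"
  then have s: "1 \<le> supnorm d (\<lambda>i. j i - m i)"
    using supnorm_nat_diff_pos[of j m] by (auto simp: supnorm_eq)
  have "supnorm d (\<lambda>i. j i - m i) powr q \<le> supnorm d (\<lambda>i. j i - m i) powr q'"
    using assms s by (rule powr_mono)
  then show "cmod (u j - u m) powr p / supnorm d (\<lambda>i. j i - m i) powr q'
      \<le> cmod (u j - u m) powr p / supnorm d (\<lambda>i. j i - m i) powr q"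
    by (rule divide_left_mono) (use s in simp_all)
qed

end

lemma hardy_parts_if_hardy_domain:
  assumes domain: "\<And>d. 0 < d \<Longrightarrow> hardy_domain d (D d)"
  shows "hardy_parts D"
  unfolding hardy_parts_def
proof (intro conjI allI impI)
  fix s p \<delta> :: real assume "0 < s" "0 < p" "0 < \<delta>"
  then have "0 < s * p"
    by simp
  then obtain K :: nat where K: "0 < K"
    and K_large: "\<And>d. \<delta> \<le> real d - s * p \<Longrightarrow>
      tail_const d (s * p) * (real K + 1) powr (s * p) / real K ^ d \<le> 1 / (2 * 2 powr p)"
    using exists_uniform_cube_size[of "s * p" \<delta> "1 / (2 * 2 powr p)"] \<open>0 < \<delta>\<close> by auto
  show "\<exists>c. \<forall>d. 1 \<le> d \<longrightarrow> s * p < real d \<longrightarrow> \<delta> \<le> real d - s * p \<longrightarrow>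
    (\<forall>u. hardy_lhs (D d) d p (s * p) u < \<infinity> \<longrightarrow>
      hardy_lhs (D d) d p (s * p) u \<le> ennreal c * hardy_rhs (D d - {zpt}) d p (s * p + real d) u)"
    using hardy_domain.hardy_subcritical[OF domain \<open>0 < s * p\<close> \<open>0 < p\<close> K K_large]
    by (intro exI[of _ "2 * 2 powr p * real K powr (s * p)"]) auto
next
  fix d :: nat and s p \<epsilon> :: real
  assume "1 \<le> d" "0 < s" "0 < p" "s * p = real d" "0 < \<epsilon>"
  then obtain c where c: "\<And>u. u zpt = 0 \<Longrightarrow>
      hardy_lhs (D d) d p (s * p + \<epsilon>) u \<le> ennreal c * hardy_rhs (D d) d p (s * p + \<epsilon> + d) u"
    using hardy_domain.hardy_supercritical[OF domain, of d "s * p + \<epsilon>" p] by auto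
  have "hardy_rhs (D d) d p (s * p + real d + \<epsilon>) u \<le> hardy_rhs (D d) d p (s * p + real d) u" for u
    using \<open>0 < \<epsilon>\<close> \<open>1 \<le> d\<close> by (intro hardy_domain.hardy_rhs_antimono[OF domain]) auto
  then show "\<exists>c. \<forall>u. u zpt = 0 \<longrightarrow>
      hardy_lhs (D d) d p (s * p + \<epsilon>) u \<le> ennreal c * hardy_rhs (D d) d p (s * p + real d + \<epsilon>) u \<and>
      ennreal c * hardy_rhs (D d) d p (s * p + real d + \<epsilon>) u \<le> ennreal c * hardy_rhs (D d) d p (s * p + real d) u"
    using c by (intro exI[of _ c]) (simp add: add_ac mult_left_mono)
next
  fix d :: nat and s p :: real
  assume "1 \<le> d" "0 < s" "0 < p" "real d < s * p"
  then show "\<exists>c. \<forall>u. u zpt = 0 \<longrightarrow> hardy_lhs (D d) d p (s * p) u \<le> ennreal c * hardy_rhs (D d) d p (s * p + real d) u"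
    using hardy_domain.hardy_supercritical[OF domain] by auto
qed

theorem theorem1p2:
  shows "hardy_parts Zplus \<and> hardy_parts Zfull"
  by (simp add: hardy_parts_if_hardy_domain hardy_domain_Zplus hardy_domain_Zfull)

end
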